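(* Let $n \ge 2$ be an integer. If $M$ is a real $n\times n$ matrix whose entries are a permutation of $0,1,\dots,n^2-1$, then $$|\det M| \le n^n\,\frac{n^2-1}{2}\left(\frac{n^3+n^2+n+1}{12}\right)^{\frac{n-1}{2}}.$$ If $M$ is a real $n\times n$ matrix whose entries are a permutation of $1,2,\dots,n^2$, then $$|\det M| \le n^n\,\frac{n^2+1}{2}\left(\frac{n^3+n^2+n+1}{12}\right)^{\frac{n-1}{2}}.$$ *)

theory Defs
  imports "HOL-Analysis.Analysis"
begin

end

theory Submission
  imports Defs
begin

(*
  Replacing M by Q^T M^T, for an orthogonal Q whose k-th column is u = (1, ..., 1) / sqrt n, keeps
  |det M| and the sum S of the squared entries, and turns row k into M u, whose squared length x
  is at least t = (T / n)^2 by Cauchy-Schwarz, T being the sum of the entries. Hadamard's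
  inequality and AM-GM over the other n - 1 rows give det^2 <= x ((S - x) / (n - 1))^(n - 1), and
  y (S - y)^(n - 1) decreases for y >= S / n, so x may be replaced by t. In terms of the mean mu
  and the variance sigma^2 of the entries this is |det M| <= n^n |mu| (sigma^2 / (n - 1))^((n - 1) / 2),
  and n^2 consecutive numbers have variance (n^4 - 1) / 12.
*)

lemma row_vec_lambda: "row l ((\<chi> i. f i) :: real^'n^'m) = f l"
  by (simp add: row_def vec_eq_iff)

lemma exists_orthogonal_rows_det_eq:
  fixes A :: "real^'n^'n"
  assumes "finite K"
  shows "\<exists>B. det B = det A \<and> (\<forall>i. norm (row i B) \<le> norm (row i A)) \<and>
             (\<forall>i\<in>K. \<forall>j. j \<noteq> i \<longrightarrow> orthogonal (row i B) (row j B))"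
  using assms
proof (induction K rule: finite_induct)
  case empty
  show ?case by (rule exI[of _ A]) auto
next
  case (insert k K)
  then obtain B where B: "det B = det A" "\<forall>i. norm (row i B) \<le> norm (row i A)"
     "\<forall>i\<in>K. \<forall>j. j \<noteq> i \<longrightarrow> orthogonal (row i B) (row j B)" by blast
  define W where "W = {row j B |j. j \<noteq> k}"
  obtain p z where p: "p \<in> span W" and z: "\<And>w. w \<in> span W \<Longrightarrow> orthogonal z w"
     and pz: "row k B = p + z"
    using orthogonal_subspace_decomp_exists[of W "row k B"] by metis
  txt \<open>Subtracting from row k its projection p onto the other rows keeps the determinant
    and can only shorten the row.\<close>
  define B' where "B' = (\<chi> l. if l = k then row k B + (- p) else row l B)"
  have "- p \<in> vec.span W" using p by (simp add: span_vec_eq span_neg)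
  then have det_B': "det B' = det B" unfolding B'_def W_def by (rule det_row_span)
  have row_k: "row k B' = z" using pz by (simp add: B'_def row_vec_lambda)
  have row_l: "l \<noteq> k \<Longrightarrow> row l B' = row l B" for l by (simp add: B'_def row_vec_lambda)
  have in_W: "l \<noteq> k \<Longrightarrow> row l B \<in> span W" for l unfolding W_def by (rule span_base) blast
  have "(norm (row k B))\<^sup>2 = (norm z)\<^sup>2 + (norm p)\<^sup>2"
    using pz z[OF p] norm_add_Pythagorean[of z p] by (simp add: add.commute)
  then have "norm z \<le> norm (row k B)"
    by (metis le_add_same_cancel1 norm_ge_zero power2_le_imp_le zero_le_power2)
  then have "norm (row i B') \<le> norm (row i A)" for i
    using B(2) row_k row_l by (metis order.trans)
  moreover have "orthogonal (row i B') (row j B')" if "i \<in> insert k K" "j \<noteq> i" for i j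
  proof (cases "i = k")
    case True
    then show ?thesis using that row_k row_l z in_W by simp
  next
    case False
    then show ?thesis
      using that B(3) row_k row_l z in_W by (cases "j = k") (auto simp: orthogonal_commute)
  qed
  ultimately show ?case using det_B' B(1) by (intro exI[of _ B']) simp
qed

lemma abs_det_le_prod_norm_rows:
  fixes A :: "real^'n^'n"
  shows "\<bar>det A\<bar> \<le> (\<Prod>i\<in>UNIV. norm (row i A))"
proof -
  obtain B where B: "det B = det A" "\<forall>i. norm (row i B) \<le> norm (row i A)"
     "\<forall>i. \<forall>j. j \<noteq> i \<longrightarrow> orthogonal (row i B) (row j B)"
    using exists_orthogonal_rows_det_eq[of "UNIV::'n set" A] by auto
  have "(det B)\<^sup>2 = det (B ** transpose B)"
    by (simp add: det_mul power2_eq_square)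
  also have "\<dots> = (\<Prod>i\<in>UNIV. (B ** transpose B) $ i $ i)"
    by (rule det_diagonal) (use B(3) in \<open>auto simp: matrix_mult_transpose_dot_row orthogonal_def\<close>)
  also have "\<dots> = (\<Prod>i\<in>UNIV. norm (row i B))\<^sup>2"
    by (simp add: matrix_mult_transpose_dot_row power2_norm_eq_inner prod_power_distrib)
  finally have "\<bar>det B\<bar>\<^sup>2 = (\<Prod>i\<in>UNIV. norm (row i B))\<^sup>2" by simp
  then have "\<bar>det B\<bar> = (\<Prod>i\<in>UNIV. norm (row i B))"
    by (rule power2_eq_imp_eq) (simp_all add: prod_nonneg)
  also have "\<dots> \<le> (\<Prod>i\<in>UNIV. norm (row i A))"
    by (rule prod_mono) (use B(2) in auto)
  finally show ?thesis using B(1) by simp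
qed

lemma prod_le_mean_power:
  fixes y :: "'a \<Rightarrow> real"
  assumes "finite A" "\<And>i. i \<in> A \<Longrightarrow> y i \<ge> 0"
  shows "(\<Prod>i\<in>A. y i) \<le> ((\<Sum>i\<in>A. y i) / card A) ^ card A"
proof (cases "A = {}")
  case False
  have "(\<Prod>i\<in>A. y i) powr (1 / card A) \<le> (\<Sum>i\<in>A. y i) / card A"
    using arith_geom_mean[OF assms(1) False assms(2)] by (simp add: sum_divide_distrib)
  then have "((\<Prod>i\<in>A. y i) powr (1 / card A)) ^ card A \<le> ((\<Sum>i\<in>A. y i) / card A) ^ card A"
    by (rule power_mono) simp
  moreover have "((\<Prod>i\<in>A. y i) powr (1 / card A)) ^ card A = (\<Prod>i\<in>A. y i)"
  proof -
    have "card A \<noteq> 0" using assms(1) False by simp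
    then have "((\<Prod>i\<in>A. y i) powr (1 / card A)) ^ card A
        = ((\<Prod>i\<in>A. y i) powr (1 / card A)) powr card A"
      by (simp add: powr_realpow')
    also have "\<dots> = (\<Prod>i\<in>A. y i)"
      using \<open>card A \<noteq> 0\<close> assms(2) by (simp add: powr_powr prod_nonneg)
    finally show ?thesis .
  qed
  ultimately show ?thesis by simp
qed simp

lemma mult_power_diff_le:
  fixes S t x :: real and m :: nat
  assumes "S \<le> real (Suc m) * t" "t \<le> x" "x \<le> S"
  shows "x * (S - x) ^ m \<le> t * (S - t) ^ m"
proof (cases m)
  case 0
  then show ?thesis using assms by simp
next
  case (Suc k)
  have "((\<lambda>y. y * (S - y) ^ m) has_real_derivative (S - y) ^ k * (S - real (Suc m) * y)) (at y)"
    for y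
  proof -
    have "((\<lambda>y. y * (S - y) ^ m) has_real_derivative
        (S - y) ^ m - y * (real m * (S - y) ^ (m - 1))) (at y)"
      by (auto intro!: derivative_eq_intros)
    moreover have "(S - y) ^ m - y * (real m * (S - y) ^ (m - 1)) = (S - y) ^ k * (S - real (Suc m) * y)"
      by (simp add: Suc algebra_simps)
    ultimately show ?thesis by simp
  qed
  moreover have "(S - y) ^ k * (S - real (Suc m) * y) \<le> 0" if "t \<le> y" "y \<le> x" for y
  proof (rule mult_nonneg_nonpos)
    show "0 \<le> (S - y) ^ k" using that assms by simp
    have "real (Suc m) * t \<le> real (Suc m) * y" using that by (intro mult_left_mono) auto
    then show "S - real (Suc m) * y \<le> 0" using assms by linarith
  qed
  ultimately show ?thesis
    using DERIV_nonpos_imp_nonincreasing[OF assms(2), of "\<lambda>y. y * (S - y) ^ m"] by blast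
qed

lemma norm_power2_vec: "(norm (v :: real^'n))\<^sup>2 = (\<Sum>j\<in>UNIV. (v $ j)\<^sup>2)"
  unfolding power2_norm_eq_inner inner_vec_def by (simp add: power2_eq_square)

lemma sum_norm_row_power2: "(\<Sum>i\<in>UNIV. (norm (row i A))\<^sup>2) = (\<Sum>i\<in>UNIV. \<Sum>j\<in>UNIV. (A $ i $ j)\<^sup>2)"
  for A :: "real^'n^'m"
  by (simp add: norm_power2_vec row_def)

lemma sum_norm_column_power2: "(\<Sum>j\<in>UNIV. (norm (column j A))\<^sup>2) = (\<Sum>i\<in>UNIV. \<Sum>j\<in>UNIV. (A $ i $ j)\<^sup>2)"
  for A :: "real^'n^'m"
  unfolding norm_power2_vec column_def by (simp add: sum.swap[of "\<lambda>j i. (A $ i $ j)\<^sup>2"])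

lemma norm_orthogonal_matrix_vector:
  fixes P :: "real^'n^'n"
  assumes "orthogonal_matrix P"
  shows "norm (P *v v) = norm v"
  using assms by (simp add: orthogonal_transformation_matrix orthogonal_transformation_norm)

lemma power2_det_le_norm_row_mult:
  fixes A :: "real^'n^'n" and k :: 'n
  shows "(det A)\<^sup>2 \<le> (norm (row k A))\<^sup>2 *
           (((\<Sum>i\<in>UNIV. (norm (row i A))\<^sup>2) - (norm (row k A))\<^sup>2) / (real CARD('n) - 1))
             ^ (CARD('n) - 1)"
proof -
  let ?y = "\<lambda>i. (norm (row i A))\<^sup>2"
  have "(det A)\<^sup>2 \<le> (\<Prod>i\<in>UNIV. norm (row i A))\<^sup>2"
    by (metis abs_det_le_prod_norm_rows abs_ge_zero power2_abs power_mono)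
  also have "\<dots> = ?y k * (\<Prod>i\<in>UNIV - {k}. ?y i)"
    by (simp add: prod.remove[of UNIV k] power_mult_distrib prod_power_distrib)
  also have "\<dots> \<le> ?y k * ((\<Sum>i\<in>UNIV - {k}. ?y i) / card (UNIV - {k})) ^ card (UNIV - {k})"
    by (intro mult_left_mono prod_le_mean_power) auto
  also have "\<dots> = ?y k * (((\<Sum>i\<in>UNIV. ?y i) - ?y k) / (real CARD('n) - 1)) ^ (CARD('n) - 1)"
    by (simp add: card_Diff_singleton sum_diff1 of_nat_diff)
  finally show ?thesis .
qed

lemma exists_det_eq_row_ge_mean:
  fixes M :: "real^'n^'n" and k :: 'n
  obtains N where "\<bar>det N\<bar> = \<bar>det M\<bar>"
    and "(\<Sum>i\<in>UNIV. (norm (row i N))\<^sup>2) = (\<Sum>i\<in>UNIV. (norm (row i M))\<^sup>2)"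
    and "((\<Sum>i\<in>UNIV. \<Sum>j\<in>UNIV. M $ i $ j) / CARD('n))\<^sup>2 \<le> (norm (row k N))\<^sup>2"
proof -
  let ?n = "real CARD('n)"
  define u :: "real^'n" where "u = (\<chi> i. 1 / sqrt ?n)"
  have "(norm u)\<^sup>2 = 1" unfolding norm_power2_vec u_def by (simp add: power_divide)
  then have "norm u = 1" by (metis norm_ge_zero power2_eq_1_iff neg_0_le_iff_le not_one_le_zero)
  then obtain Q where Q: "orthogonal_matrix Q" "Q *v axis k 1 = u"
    using orthogonal_matrix_exists_basis by metis
  define N where "N = transpose Q ** transpose M"
  show thesis
  proof
    show "\<bar>det N\<bar> = \<bar>det M\<bar>"
      using det_orthogonal_matrix[OF Q(1)] unfolding N_def by (auto simp: det_mul)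
    have column_N: "column j N = transpose Q *v row j M" for j
      by (simp add: N_def column_def row_def matrix_matrix_mult_def matrix_vector_mult_def
          transpose_def vec_eq_iff)
    have "(\<Sum>i\<in>UNIV. (norm (row i N))\<^sup>2) = (\<Sum>j\<in>UNIV. (norm (column j N))\<^sup>2)"
      by (simp only: sum_norm_row_power2 sum_norm_column_power2)
    also have "\<dots> = (\<Sum>j\<in>UNIV. (norm (row j M))\<^sup>2)"
      using Q(1) by (simp only: column_N norm_orthogonal_matrix_vector orthogonal_matrix_transpose)
    finally show "(\<Sum>i\<in>UNIV. (norm (row i N))\<^sup>2) = (\<Sum>i\<in>UNIV. (norm (row i M))\<^sup>2)" .
    define s where "s j = (\<Sum>l\<in>UNIV. M $ j $ l)" for j
    have "Q $ l $ k = u $ l" for l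
      using Q(2) by (simp add: vec_eq_iff matrix_vector_mult_def axis_def if_distrib cong: if_cong)
    then have "row k N = (\<chi> j. s j / sqrt ?n)"
      by (simp add: N_def s_def u_def row_def matrix_matrix_mult_def transpose_def vec_eq_iff
          sum_divide_distrib mult.commute)
    then have row_k_N: "(norm (row k N))\<^sup>2 = (\<Sum>j\<in>UNIV. (s j)\<^sup>2) / ?n"
      by (simp add: norm_power2_vec power_divide sum_divide_distrib)
    have "((\<Sum>j\<in>UNIV. s j) / ?n)\<^sup>2 = (\<Sum>j\<in>UNIV. s j)\<^sup>2 / ?n\<^sup>2"
      by (simp add: power_divide)
    also have "\<dots> \<le> (\<Sum>j\<in>UNIV. (s j)\<^sup>2) * ?n / ?n\<^sup>2"
      using sum_squared_le_sum_of_squares[of s UNIV] by (simp add: divide_right_mono)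
    also have "\<dots> = (norm (row k N))\<^sup>2"
      unfolding row_k_N by (simp add: power2_eq_square)
    finally show "((\<Sum>i\<in>UNIV. \<Sum>j\<in>UNIV. M $ i $ j) / CARD('n))\<^sup>2 \<le> (norm (row k N))\<^sup>2"
      by (simp only: s_def)
  qed
qed

lemma sqrt_mult_power_eq_powr:
  fixes t c :: real
  assumes "0 \<le> t" "0 \<le> c" "m \<noteq> 0"
  shows "sqrt (t * c ^ m) = sqrt t * c powr (real m / 2)"
  using assms by (simp add: real_sqrt_mult powr_half_sqrt_powr powr_realpow')

lemma abs_det_le_entry_sums:
  fixes M :: "real^'n^'n"
  defines "T \<equiv> \<Sum>i\<in>UNIV. \<Sum>j\<in>UNIV. M $ i $ j"
    and "S \<equiv> \<Sum>i\<in>UNIV. \<Sum>j\<in>UNIV. (M $ i $ j)\<^sup>2"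
  assumes n: "CARD('n) \<ge> 2" and S_le: "S \<le> CARD('n) * (T / CARD('n))\<^sup>2"
  shows "\<bar>det M\<bar> \<le> \<bar>T\<bar> / CARD('n) *
           ((S - (T / CARD('n))\<^sup>2) / (real CARD('n) - 1)) powr ((real CARD('n) - 1) / 2)"
proof -
  let ?n = "CARD('n)"
  define t where "t = (T / ?n)\<^sup>2"
  fix k :: 'n
  obtain N where det_N: "\<bar>det N\<bar> = \<bar>det M\<bar>"
    and sum_N: "(\<Sum>i\<in>UNIV. (norm (row i N))\<^sup>2) = S"
    and t_le: "t \<le> (norm (row k N))\<^sup>2"
    using exists_det_eq_row_ge_mean[of M k]
    unfolding S_def T_def t_def sum_norm_row_power2 by metis
  define x where "x = (norm (row k N))\<^sup>2"
  have x_le: "x \<le> S"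
    unfolding x_def sum_N[symmetric] by (rule member_le_sum) auto
  have n1: "real (?n - 1) = real ?n - 1" "Suc (?n - 1) = ?n" using n by auto
  have "(det N)\<^sup>2 \<le> x * ((S - x) / real (?n - 1)) ^ (?n - 1)"
    using power2_det_le_norm_row_mult[of N k] unfolding sum_N n1 x_def .
  also have "\<dots> = x * (S - x) ^ (?n - 1) / real (?n - 1) ^ (?n - 1)"
    by (simp add: power_divide)
  also have "\<dots> \<le> t * (S - t) ^ (?n - 1) / real (?n - 1) ^ (?n - 1)"
    using mult_power_diff_le[of S "?n - 1" t x] S_le t_le x_le
    by (simp add: n1 t_def x_def divide_right_mono)
  also have "\<dots> = t * ((S - t) / real (?n - 1)) ^ (?n - 1)"
    by (simp add: power_divide)
  finally have "\<bar>det M\<bar> \<le> sqrt (t * ((S - t) / real (?n - 1)) ^ (?n - 1))"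
    using det_N by (metis real_sqrt_abs real_sqrt_le_mono)
  also have "\<dots> = sqrt t * ((S - t) / real (?n - 1)) powr (real (?n - 1) / 2)"
    using n t_le x_le by (intro sqrt_mult_power_eq_powr) (auto simp: t_def x_def)
  finally show ?thesis
    using n by (simp add: t_def n1 real_sqrt_abs)
qed

lemma sum_entries_bij_betw:
  fixes M :: "real^'n^'m" and A :: "real set"
  assumes "bij_betw (\<lambda>(i, j). M $ i $ j) UNIV A"
  shows "(\<Sum>i\<in>UNIV. \<Sum>j\<in>UNIV. g (M $ i $ j)) = (\<Sum>v\<in>A. g v)"
proof -
  have "(\<Sum>i\<in>UNIV. \<Sum>j\<in>UNIV. g (M $ i $ j)) = (\<Sum>p\<in>UNIV. g ((\<lambda>(i, j). M $ i $ j) p))"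
    by (simp add: sum.cartesian_product case_prod_unfold)
  also have "\<dots> = (\<Sum>v\<in>A. g v)"
    by (rule sum.reindex_bij_betw[OF assms])
  finally show ?thesis .
qed

lemma sum_consecutive: "(\<Sum>k<m. a + real k) = real m * (a + (real m - 1) / 2)"
  by (induction m) (auto simp: field_simps)

lemma sum_consecutive_power2:
  "(\<Sum>k<m. (a + real k)\<^sup>2) = real m * ((a + (real m - 1) / 2)\<^sup>2 + ((real m)\<^sup>2 - 1) / 12)"
  by (induction m) (auto simp: field_simps power2_eq_square)

lemma power2_mult_powr_half:
  fixes N x :: real
  assumes "0 < N"
  shows "(N\<^sup>2 * x) powr (real m / 2) = N ^ m * x powr (real m / 2)"
proof -
  have "(N\<^sup>2) powr (real m / 2) = N powr real m"
    using assms by (simp add: powr_powr flip: powr_numeral)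
  then show ?thesis
    using assms by (simp add: powr_mult powr_realpow)
qed

lemma abs_det_le_mean_variance:
  fixes M :: "real^'n^'n" and \<mu> \<sigma>2 :: real
  assumes n: "CARD('n) \<ge> 2"
    and mean: "(\<Sum>i\<in>UNIV. \<Sum>j\<in>UNIV. M $ i $ j) = real CARD('n)^2 * \<mu>"
    and second_moment: "(\<Sum>i\<in>UNIV. \<Sum>j\<in>UNIV. (M $ i $ j)\<^sup>2) = real CARD('n)^2 * (\<mu>\<^sup>2 + \<sigma>2)"
    and variance_le: "\<sigma>2 \<le> (real CARD('n) - 1) * \<mu>\<^sup>2"
  shows "\<bar>det M\<bar> \<le> real CARD('n) ^ CARD('n) * \<bar>\<mu>\<bar> *
           (\<sigma>2 / (real CARD('n) - 1)) powr ((real CARD('n) - 1) / 2)"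
proof -
  let ?N = "real CARD('n)"
  let ?T = "\<Sum>i\<in>UNIV. \<Sum>j\<in>UNIV. M $ i $ j"
  let ?S = "\<Sum>i\<in>UNIV. \<Sum>j\<in>UNIV. (M $ i $ j)\<^sup>2"
  have N2: "?N \<ge> 2" using n by simp
  have T_div: "?T / ?N = ?N * \<mu>" and abs_T_div: "\<bar>?T\<bar> / ?N = \<bar>?N * \<mu>\<bar>"
    using mean N2 by (simp_all add: power2_eq_square abs_mult)
  have S_minus: "?S - (?N * \<mu>)\<^sup>2 = ?N\<^sup>2 * \<sigma>2"
    using second_moment by (simp add: algebra_simps power_mult_distrib)
  have "?N\<^sup>2 * \<sigma>2 \<le> ?N\<^sup>2 * ((?N - 1) * \<mu>\<^sup>2)"
    using variance_le by (simp add: mult_left_mono)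
  then have S_le: "?S \<le> ?N * (?T / ?N)\<^sup>2"
    using S_minus unfolding T_div by (simp add: algebra_simps power_mult_distrib power2_eq_square)
  have "\<bar>det M\<bar> \<le> \<bar>?N * \<mu>\<bar> * (?N\<^sup>2 * \<sigma>2 / (?N - 1)) powr ((?N - 1) / 2)"
    using abs_det_le_entry_sums[OF n S_le] unfolding abs_T_div T_div S_minus .
  also have "\<dots> = ?N * \<bar>\<mu>\<bar> * (?N ^ (CARD('n) - 1) * (\<sigma>2 / (?N - 1)) powr ((?N - 1) / 2))"
  proof -
    have "(?N - 1) / 2 = real (CARD('n) - 1) / 2" using n by (simp add: of_nat_diff)
    then show ?thesis
      using N2 power2_mult_powr_half[of ?N "\<sigma>2 / (?N - 1)" "CARD('n) - 1"] by (simp add: abs_mult)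
  qed
  also have "\<dots> = ?N ^ CARD('n) * \<bar>\<mu>\<bar> * (\<sigma>2 / (?N - 1)) powr ((?N - 1) / 2)"
    using power_minus_mult[of "CARD('n)" ?N] n by (simp add: mult_ac)
  finally show ?thesis .
qed

lemma variance_consecutive_le:
  fixes N a :: real
  assumes N: "2 \<le> N" and a: "0 \<le> a"
  shows "((N\<^sup>2)\<^sup>2 - 1) / 12 \<le> (N - 1) * (a + (N\<^sup>2 - 1) / 2)\<^sup>2"
proof -
  have "2 * N \<le> N\<^sup>2" using N by (simp add: power2_eq_square mult_right_mono)
  moreover have "N\<^sup>2 - 1 \<le> (N - 1) * (N\<^sup>2 - 1)"
    using N \<open>2 * N \<le> N\<^sup>2\<close> by (simp add: mult_right_mono)
  ultimately have "N\<^sup>2 + 1 \<le> 3 * ((N - 1) * (N\<^sup>2 - 1))"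
    using N by linarith
  have "(N\<^sup>2)\<^sup>2 - 1 = (N\<^sup>2 + 1) * (N\<^sup>2 - 1)"
    by (simp add: algebra_simps power2_eq_square)
  also have "\<dots> \<le> 3 * ((N - 1) * (N\<^sup>2 - 1)) * (N\<^sup>2 - 1)"
    using \<open>N\<^sup>2 + 1 \<le> _\<close> N \<open>2 * N \<le> N\<^sup>2\<close> by (intro mult_right_mono) auto
  also have "\<dots> = 12 * ((N - 1) * ((N\<^sup>2 - 1) / 2)\<^sup>2)"
    by (simp add: power2_eq_square)
  also have "\<dots> \<le> 12 * ((N - 1) * (a + (N\<^sup>2 - 1) / 2)\<^sup>2)"
    using \<open>2 * N \<le> N\<^sup>2\<close> N a by (intro mult_left_mono power_mono) auto
  finally show ?thesis by (simp add: pos_divide_le_eq mult.commute)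
qed

lemma abs_det_le_consecutive_entries:
  fixes M :: "real^'n^'n" and a :: real
  assumes n: "CARD('n) \<ge> 2" and a: "0 \<le> a"
    and entries: "bij_betw (\<lambda>(i, j). M $ i $ j) UNIV ((\<lambda>k. a + real k) ` {..<CARD('n)^2})"
  shows "\<bar>det M\<bar> \<le> real CARD('n) ^ CARD('n) * (a + (real CARD('n)^2 - 1) / 2) *
           ((real CARD('n)^3 + real CARD('n)^2 + real CARD('n) + 1) / 12) powr ((real CARD('n) - 1) / 2)"
proof -
  let ?n = "CARD('n)"
  define N where "N = real ?n"
  define \<mu> where "\<mu> = a + (N\<^sup>2 - 1) / 2"
  have N2: "N \<ge> 2" using n by (simp add: N_def)
  have inj: "inj_on (\<lambda>k. a + real k) {..<?n^2}" by (simp add: inj_on_def)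
  have "(\<Sum>i\<in>UNIV. \<Sum>j\<in>UNIV. M $ i $ j) = N\<^sup>2 * \<mu>"
    using sum_entries_bij_betw[OF entries, of id]
    by (simp add: sum.reindex[OF inj] sum_consecutive N_def \<mu>_def)
  moreover have "(\<Sum>i\<in>UNIV. \<Sum>j\<in>UNIV. (M $ i $ j)\<^sup>2) = N\<^sup>2 * (\<mu>\<^sup>2 + ((N\<^sup>2)\<^sup>2 - 1) / 12)"
    using sum_entries_bij_betw[OF entries, of power2]
    by (simp add: sum.reindex[OF inj] sum_consecutive_power2 N_def \<mu>_def)
  moreover have "((N\<^sup>2)\<^sup>2 - 1) / 12 \<le> (N - 1) * \<mu>\<^sup>2"
    unfolding \<mu>_def using N2 a by (rule variance_consecutive_le)
  ultimately have "\<bar>det M\<bar> \<le> N ^ ?n * \<bar>\<mu>\<bar> * (((N\<^sup>2)\<^sup>2 - 1) / 12 / (N - 1)) powr ((N - 1) / 2)"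
    using abs_det_le_mean_variance[OF n] unfolding N_def by blast
  also have "((N\<^sup>2)\<^sup>2 - 1) / 12 / (N - 1) = (N^3 + N^2 + N + 1) / 12"
    using N2 by (simp add: field_simps power2_eq_square power3_eq_cube)
  also have "\<bar>\<mu>\<bar> = \<mu>"
    using N2 a by (simp add: \<mu>_def)
  finally show ?thesis by (simp only: N_def \<mu>_def)
qed

theorem mainTheorem8:
  fixes M :: "real ^ 'n ^ 'n"
  assumes "CARD('n) \<ge> 2"
  shows "(bij_betw (\<lambda>(i, j). M $ i $ j) UNIV (real ` {0..<CARD('n)^2}) \<longrightarrow>
            \<bar>det M\<bar> \<le> real CARD('n) ^ CARD('n) * ((real CARD('n)^2 - 1) / 2) *
              ((real CARD('n)^3 + real CARD('n)^2 + real CARD('n) + 1) / 12) powr ((real CARD('n) - 1) / 2))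
       \<and> (bij_betw (\<lambda>(i, j). M $ i $ j) UNIV (real ` {1..CARD('n)^2}) \<longrightarrow>
            \<bar>det M\<bar> \<le> real CARD('n) ^ CARD('n) * ((real CARD('n)^2 + 1) / 2) *
              ((real CARD('n)^3 + real CARD('n)^2 + real CARD('n) + 1) / 12) powr ((real CARD('n) - 1) / 2))"
proof -
  let ?m = "CARD('n)^2"
  have "real ` {0..<?m} = (\<lambda>k. 0 + real k) ` {..<?m}"
    by (simp add: atLeast0LessThan)
  moreover have "real ` {1..?m} = (\<lambda>k. 1 + real k) ` {..<?m}"
    unfolding image_Suc_lessThan[symmetric] image_image by simp
  moreover have "1 + (real CARD('n)^2 - 1) / 2 = (real CARD('n)^2 + 1) / 2"
    by (simp add: field_simps)
  ultimately show ?thesis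
    using abs_det_le_consecutive_entries[OF assms order_refl, of M]
      abs_det_le_consecutive_entries[OF assms zero_le_one, of M]
    by (auto simp only: add_0_left)
qed

end
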